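(* Let $n\ge1$ and let $A$ be a $2n\times 2n$ real symmetric positive definite matrix, written in block form $A=\begin{pmatrix} A_{11} & A_{12}\\ A_{12}^T & A_{22}\end{pmatrix}$ with $n\times n$ blocks. Let $\Delta_{11},\Delta_{12},\Delta_{22}\in\mathbb{R}^n$ be the vectors of diagonal entries of $A_{11},A_{12},A_{22}$ respectively, and define (all operations entrywise) $$\Delta_{\mathrm{w}}(A)\coloneqq\sqrt{\frac{\Delta_{11}^2+\Delta_{22}^2}{2}},\qquad \Delta_{\mathrm{h}}(A)\coloneqq\sqrt{\frac{\Delta_{11}^2+\Delta_{22}^2+2\Delta_{12}^2}{2}}.$$ Then the following are equivalent: (i) $\Delta_{\mathrm{w}}(A)\prec d_{\mathrm{s}}(A)$; (ii) $\Delta_{\mathrm{h}}(A)\prec d_{\mathrm{s}}(A)$; (iii) $A$ is orthosymplectically diagonalizable in the sense of Williamson's theorem.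
   Context: Let $J_{2n}=\begin{pmatrix}0 & I_n\\ -I_n & 0\end{pmatrix}$. A $2n\times 2n$ real matrix $S$ is symplectic if $S^TJ_{2n}S=J_{2n}$; $S$ is orthosymplectic if it is symplectic and orthogonal ($S^TS=I_{2n}$). Williamson's theorem: for every $2n\times 2n$ real symmetric positive definite matrix $B$ there is a symplectic $S$ with $S^TBS=\begin{pmatrix} D&0\\0&D\end{pmatrix}$, where $D$ is an $n\times n$ diagonal matrix with positive diagonal entries; these diagonal entries, which are uniquely determined up to order, are the symplectic eigenvalues of $B$, and $d_{\mathrm{s}}(B)\in\mathbb{R}^n$ denotes the vector of symplectic eigenvalues $d_1(B)\le\cdots\le d_n(B)$. $B$ is called orthosymplectically diagonalizable in the sense of Williamson's theorem if such an $S$ can be chosen orthosymplectic. For $x\in\mathbb{R}^n$ write $x^\uparrow_1\le\cdots\le x^\uparrow_n$ for its entries in increasing order. For $x,y\in\mathbb{R}^n$, $x$ is majorized by $y$, written $x\prec y$, if $\sum_{i=1}^k x^\uparrow_i\ge\sum_{i=1}^k y^\uparrow_i$ for $k=1,\dots,n$, with equality for $k=n$. *)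

theory Defs
  imports "HOL-Analysis.Analysis" "HOL-Library.Multiset"
begin

text \<open>A 2n x 2n real matrix is indexed by the type 'n + 'n, where Inl i is the
  i-th index of the first block and Inr i the i-th index of the second block;
  n = CARD('n) \<ge> 1.\<close>

type_synonym 'n dmat = "real ^ ('n + 'n) ^ ('n + 'n)"

definition J_mat :: "'n::finite dmat" where
  "J_mat = (\<chi> p q. case (p, q) of
              (Inl i, Inr j) \<Rightarrow> (if i = j then 1 else 0)
            | (Inr i, Inl j) \<Rightarrow> (if i = j then -1 else 0)
            | _ \<Rightarrow> 0)"

definition symplectic :: "'n::finite dmat \<Rightarrow> bool" where
  "symplectic S \<longleftrightarrow> transpose S ** J_mat ** S = J_mat"

definition orthosymplectic :: "'n::finite dmat \<Rightarrow> bool" where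
  "orthosymplectic S \<longleftrightarrow> symplectic S \<and> orthogonal_matrix S"

definition blockdiag :: "real ^ 'n \<Rightarrow> 'n::finite dmat" where
  "blockdiag d = (\<chi> p q. case (p, q) of
              (Inl i, Inl j) \<Rightarrow> (if i = j then d $ i else 0)
            | (Inr i, Inr j) \<Rightarrow> (if i = j then d $ i else 0)
            | _ \<Rightarrow> 0)"

definition sym_posdef :: "'n::finite dmat \<Rightarrow> bool" where
  "sym_posdef A \<longleftrightarrow> transpose A = A \<and> (\<forall>x. x \<noteq> 0 \<longrightarrow> x \<bullet> (A *v x) > 0)"

definition incr :: "real ^ 'n::finite \<Rightarrow> real list" where
  "incr x = sorted_list_of_multiset (image_mset (\<lambda>i. x $ i) (mset_set UNIV))"

definition williamson :: "'n::finite dmat \<Rightarrow> 'n dmat \<Rightarrow> real ^ 'n \<Rightarrow> bool" where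
  "williamson B S d \<longleftrightarrow> symplectic S \<and> (\<forall>i. d $ i > 0) \<and>
     transpose S ** B ** S = blockdiag d"

text \<open>d_s(B): the symplectic eigenvalues in increasing order (uniquely determined).\<close>
definition symp_eigs :: "'n::finite dmat \<Rightarrow> real list" where
  "symp_eigs B = (THE l. \<exists>S d. williamson B S d \<and> l = incr d)"

definition orthosymp_diagonalizable :: "'n::finite dmat \<Rightarrow> bool" where
  "orthosymp_diagonalizable B \<longleftrightarrow> (\<exists>S d. williamson B S d \<and> orthosymplectic S)"

definition majorized :: "real list \<Rightarrow> real list \<Rightarrow> bool" where
  "majorized xs ys \<longleftrightarrow> length xs = length ys \<and>
     (\<forall>k \<le> length xs. sum_list (take k (sort xs)) \<ge> sum_list (take k (sort ys))) \<and>
     sum_list xs = sum_list ys"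

definition Delta11 :: "'n::finite dmat \<Rightarrow> real ^ 'n" where
  "Delta11 A = (\<chi> i. A $ Inl i $ Inl i)"
definition Delta12 :: "'n::finite dmat \<Rightarrow> real ^ 'n" where
  "Delta12 A = (\<chi> i. A $ Inl i $ Inr i)"
definition Delta22 :: "'n::finite dmat \<Rightarrow> real ^ 'n" where
  "Delta22 A = (\<chi> i. A $ Inr i $ Inr i)"

definition Delta_w :: "'n::finite dmat \<Rightarrow> real ^ 'n" where
  "Delta_w A = (\<chi> i. sqrt (((Delta11 A $ i)\<^sup>2 + (Delta22 A $ i)\<^sup>2) / 2))"
definition Delta_h :: "'n::finite dmat \<Rightarrow> real ^ 'n" where
  "Delta_h A = (\<chi> i. sqrt (((Delta11 A $ i)\<^sup>2 + (Delta22 A $ i)\<^sup>2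
                              + 2 * (Delta12 A $ i)\<^sup>2) / 2))"

end

theory Submission
  imports Defs
begin

text \<open>Williamson's theorem is proved by a symplectic Gram--Schmidt process for the inner product
  \<open>\<langle>x, y\<rangle>\<^sub>A = x \<bullet> A y\<close>: the operator \<open>K = A\<^sup>-\<^sup>1 J\<close> is \<open>A\<close>-skew-adjoint, a maximizer of
  \<open>|Kx|\<^sub>A / |x|\<^sub>A\<close> spans with \<open>Kx\<close> a normalized symplectic pair, and one recurses on its
  \<open>A\<close>-orthogonal complement. The symplectic eigenvalues are unique because their squares are the
  eigenvalues of \<open>- (J A)\<^sup>2\<close>.

  For \<open>S\<^sup>T A S = diag(D, D)\<close> and \<open>X = S\<^sup>-\<^sup>1\<close> with rows \<open>a\<^sub>j, b\<^sub>j\<close>, one gets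
  \<open>tr A = 2 \<Sigma> d\<^sub>j + \<Sigma> d\<^sub>j |a\<^sub>j - J b\<^sub>j|\<^sup>2\<close>, so \<open>tr A \<ge> 2 \<Sigma> d\<^sub>j\<close> with equality iff \<open>S\<close> is
  orthogonal. Both \<open>\<Delta>\<^sub>w \<prec> d\<close> and \<open>\<Delta>\<^sub>h \<prec> d\<close> force \<open>\<Sigma> \<Delta>\<^sub>w \<le> \<Sigma> d\<close>, while
  \<open>\<Sigma> \<Delta>\<^sub>w \<ge> tr A / 2\<close> by the quadratic-mean inequality; hence equality and orthosymplecticity.
  Conversely, for orthosymplectic \<open>S\<close> the diagonal of \<open>A = S diag(D, D) S\<^sup>T\<close> is
  \<open>\<Delta>\<^sub>1\<^sub>1 = \<Delta>\<^sub>2\<^sub>2 = W d\<close> with \<open>W\<close> doubly stochastic and \<open>\<Delta>\<^sub>1\<^sub>2 = 0\<close>, so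
  \<open>\<Delta>\<^sub>w = \<Delta>\<^sub>h = W d \<prec> d\<close>.\<close>

section \<open>The standard symplectic form\<close>

lemma sum_UNIV_Plus:
  fixes f :: "'a::finite + 'b::finite \<Rightarrow> 'c::comm_monoid_add"
  shows "sum f UNIV = (\<Sum>i\<in>UNIV. f (Inl i)) + (\<Sum>i\<in>UNIV. f (Inr i))"
  using sum.Plus[of "UNIV :: 'a set" "UNIV :: 'b set" f] by (simp add: comp_def)

lemma sum_if_eq_times [simp]:
  fixes f :: "'a::finite \<Rightarrow> real"
  shows "(\<Sum>j\<in>UNIV. (if i = j then c else 0) * f j) = c * f i"
    "(\<Sum>j\<in>UNIV. (if j = i then c else 0) * f j) = c * f i"
    "(\<Sum>j\<in>UNIV. f j * (if j = i then c else 0)) = f i * c"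
  by (simp_all add: if_distrib[of "\<lambda>x. x * _"] if_distrib[of "\<lambda>x. _ * x"] cong: if_cong)

lemma vec_Plus_eq_iff:
  "(x::'a^('n::finite + 'n)) = y \<longleftrightarrow> (\<forall>i. x $ Inl i = y $ Inl i) \<and> (\<forall>i. x $ Inr i = y $ Inr i)"
  by (metis sum.exhaust vec_eq_iff)

lemma inner_Plus:
  "(x::real^('n::finite + 'n)) \<bullet> y = (\<Sum>i\<in>UNIV. x $ Inl i * y $ Inl i) + (\<Sum>i\<in>UNIV. x $ Inr i * y $ Inr i)"
  by (simp add: inner_vec_def sum_UNIV_Plus)

lemma card_UNIV_Plus_self: "CARD('n::finite + 'n) = 2 * CARD('n)"
  by (simp add: UNIV_Plus_UNIV[symmetric] card_Plus del: UNIV_Plus_UNIV)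

lemma J_mat_nth:
  "(J_mat::'n::finite dmat) $ Inl i $ Inl j = 0"
  "(J_mat::'n::finite dmat) $ Inr i $ Inr j = 0"
  "(J_mat::'n::finite dmat) $ Inl i $ Inr j = (if i = j then 1 else 0)"
  "(J_mat::'n::finite dmat) $ Inr i $ Inl j = (if i = j then -1 else 0)"
  by (simp_all add: J_mat_def)

lemma J_mat_mult_vec:
  "((J_mat::'n::finite dmat) *v x) $ Inl i = x $ Inr i"
  "((J_mat::'n::finite dmat) *v x) $ Inr i = - x $ Inl i"
  by (simp_all add: matrix_vector_mult_def sum_UNIV_Plus J_mat_nth)

lemma J_mat_mult_J_mat_mult_vec: "(J_mat::'n::finite dmat) *v (J_mat *v x) = - x"
  by (simp add: vec_Plus_eq_iff J_mat_mult_vec)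

lemma J_mat_squared: "(J_mat::'n::finite dmat) ** J_mat = - mat 1"
proof (rule matrix_eq[THEN iffD2], intro allI)
  fix x :: "real^('n+'n)"
  have "- mat 1 *v x = - x"
    by (simp add: vec_eq_iff matrix_vector_mult_def mat_def sum_negf)
  then show "(J_mat ** J_mat) *v x = (- mat 1) *v x"
    by (simp add: matrix_vector_mul_assoc[symmetric] J_mat_mult_J_mat_mult_vec)
qed

lemma inner_J_mat:
  "x \<bullet> ((J_mat::'n::finite dmat) *v y) = (\<Sum>i\<in>UNIV. x $ Inl i * y $ Inr i - x $ Inr i * y $ Inl i)"
  by (simp add: inner_Plus J_mat_mult_vec sum_subtractf sum_negf)

lemma inner_J_mat_swap: "x \<bullet> ((J_mat::'n::finite dmat) *v y) = - (y \<bullet> (J_mat *v x))"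
  unfolding inner_J_mat sum_negf[symmetric] by (rule sum.cong) (auto simp: algebra_simps)

lemma inner_J_mat_self: "x \<bullet> ((J_mat::'n::finite dmat) *v x) = 0"
  using inner_J_mat_swap[of x x] by simp

lemma inner_J_mat_J_mat: "(J_mat *v x) \<bullet> ((J_mat::'n::finite dmat) *v y) = x \<bullet> y"
  by (simp add: inner_Plus J_mat_mult_vec add.commute)

definition symp_form :: "real^('n::finite + 'n) \<Rightarrow> real^('n + 'n) \<Rightarrow> real" where
  "symp_form x y = x \<bullet> (J_mat *v y)"

lemma symp_form_swap: "symp_form x y = - symp_form y x"
  unfolding symp_form_def by (rule inner_J_mat_swap)

lemma symp_form_self [simp]: "symp_form x x = 0"
  by (simp add: symp_form_def inner_J_mat_self)

lemma blockdiag_mult_vec: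
  "(blockdiag d *v x) $ Inl i = d $ i * x $ Inl i"
  "(blockdiag d *v x) $ Inr i = d $ i * x $ Inr i"
  by (simp_all add: blockdiag_def matrix_vector_mult_def sum_UNIV_Plus)

section \<open>Symplectic matrices\<close>

lemma matrix_mul_uminus_left: "(- A) ** (B::real^'a^'b) = - ((A::real^'b^'c) ** B)"
  by (simp add: matrix_matrix_mult_def vec_eq_iff sum_negf)

lemma matrix_mul_uminus_right: "(A::real^'b^'c) ** (- B) = - (A ** (B::real^'a^'b))"
  by (simp add: matrix_matrix_mult_def vec_eq_iff sum_negf)

lemma transpose_mult_mult_nth:
  "(transpose S ** M ** S) $ p $ q = column p S \<bullet> (M *v column q (S::real^'a^'a))"
proof -
  have "(transpose S ** M ** S) $ p $ q = (\<Sum>r\<in>UNIV. \<Sum>s\<in>UNIV. S$s$p * (M$s$r * S$r$q))"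
    by (simp add: matrix_matrix_mult_def transpose_def sum_distrib_right mult.assoc)
  also have "\<dots> = column p S \<bullet> (M *v column q S)"
    by (subst sum.swap) (simp add: inner_vec_def matrix_vector_mult_def column_def sum_distrib_left)
  finally show ?thesis .
qed

definition symplectic_inverse :: "'n::finite dmat \<Rightarrow> 'n dmat" where
  "symplectic_inverse S = - (J_mat ** transpose S ** J_mat)"

lemma symplectic_inverse:
  fixes S :: "'n::finite dmat"
  assumes "symplectic S"
  shows "symplectic_inverse S ** S = mat 1" "S ** symplectic_inverse S = mat 1"
proof -
  have "symplectic_inverse S ** S = - (J_mat ** (transpose S ** J_mat ** S))"
    by (simp add: symplectic_inverse_def matrix_mul_uminus_left matrix_mul_assoc)
  then show left: "symplectic_inverse S ** S = mat 1"
    using assms by (simp add: symplectic_def J_mat_squared)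
  then show "S ** symplectic_inverse S = mat 1"
    using matrix_left_right_inverse by blast
qed

lemma symplectic_invertible: "symplectic S \<Longrightarrow> invertible S"
  using symplectic_inverse invertible_def by blast

lemma symplectic_mult_J_mat_transpose:
  fixes S :: "'n::finite dmat"
  assumes "symplectic S"
  shows "S ** J_mat ** transpose S = J_mat"
proof -
  have "- (S ** J_mat ** transpose S ** J_mat) = mat 1"
    using symplectic_inverse(2)[OF assms]
    by (simp add: symplectic_inverse_def matrix_mul_uminus_right matrix_mul_assoc)
  then have "- (S ** J_mat ** transpose S ** J_mat) ** J_mat = J_mat" by simp
  then have "(S ** J_mat ** transpose S) ** (- (J_mat ** J_mat)) = J_mat"
    by (simp add: matrix_mul_uminus_left matrix_mul_uminus_right matrix_mul_assoc)
  then show ?thesis by (simp add: J_mat_squared)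
qed

lemma symplectic_transpose: "symplectic S \<Longrightarrow> symplectic (transpose S)"
  using symplectic_mult_J_mat_transpose by (simp add: symplectic_def)

lemma symplectic_symplectic_inverse:
  fixes S :: "'n::finite dmat"
  assumes "symplectic S"
  shows "symplectic (symplectic_inverse S)"
proof -
  let ?X = "symplectic_inverse S"
  have inv: "transpose ?X ** transpose S = mat 1"
    using symplectic_inverse(2)[OF assms] by (metis matrix_transpose_mul transpose_mat)
  have "transpose ?X ** J_mat ** ?X = transpose ?X ** (transpose S ** J_mat ** S) ** ?X"
    using assms by (simp add: symplectic_def)
  also have "\<dots> = (transpose ?X ** transpose S) ** J_mat ** (S ** ?X)"
    by (simp add: matrix_mul_assoc)
  finally show ?thesis
    using symplectic_inverse[OF assms] inv by (simp add: symplectic_def)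
qed

lemma symplectic_rows_inner_J_mat:
  fixes X :: "'n::finite dmat"
  assumes "symplectic X"
  shows "row p X \<bullet> (J_mat *v row q X) = J_mat $ p $ q"
  using transpose_mult_mult_nth[of "transpose X" J_mat p q] symplectic_mult_J_mat_transpose[OF assms]
  by simp

section \<open>Existence of the Williamson normal form\<close>

lemma linear_coeff_eq_0_if_quadratic_nonneg:
  fixes b q :: real
  assumes "\<And>t. 0 \<le> 2 * t * b + t\<^sup>2 * q"
  shows "b = 0"
proof (rule ccontr)
  assume "b \<noteq> 0"
  define s where "s = 1 / (\<bar>q\<bar> + 1)"
  have s_pos: "s > 0" by (simp add: s_def)
  have "s * q \<le> s * \<bar>q\<bar>" using s_pos by (simp add: mult_left_mono)
  also have "\<dots> < 1" by (simp add: s_def field_simps)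
  finally have "s * q - 2 < 0" by simp
  have "0 \<le> 2 * (- s * b) * b + (- s * b)\<^sup>2 * q" by (rule assms)
  also have "\<dots> = (s * b\<^sup>2) * (s * q - 2)" by (simp add: power2_eq_square algebra_simps)
  also have "\<dots> < 0"
    using s_pos \<open>b \<noteq> 0\<close> \<open>s * q - 2 < 0\<close> by (simp add: mult_pos_neg)
  finally show False by simp
qed

locale spd_matrix =
  fixes A :: "'n::finite dmat"
  assumes sym_posdef: "sym_posdef A"
begin

definition Ainner :: "real^('n + 'n) \<Rightarrow> real^('n + 'n) \<Rightarrow> real" where
  "Ainner x y = x \<bullet> (A *v y)"

lemma transpose_A: "transpose A = A"
  using sym_posdef by (simp add: sym_posdef_def)

lemma Ainner_commute: "Ainner x y = Ainner y x"
proof -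
  have "Ainner x y = (x v* A) \<bullet> y" by (simp add: Ainner_def dot_lmul_matrix)
  also have "x v* A = A *v x" by (metis transpose_A transpose_matrix_vector)
  finally show ?thesis by (simp add: Ainner_def inner_commute)
qed

lemma Ainner_pos: "x \<noteq> 0 \<Longrightarrow> Ainner x x > 0"
  using sym_posdef by (simp add: sym_posdef_def Ainner_def)

lemma Ainner_simps:
  "Ainner (x + y) z = Ainner x z + Ainner y z" "Ainner z (x + y) = Ainner z x + Ainner z y"
  "Ainner (x - y) z = Ainner x z - Ainner y z" "Ainner z (x - y) = Ainner z x - Ainner z y"
  "Ainner (c *\<^sub>R x) z = c * Ainner x z" "Ainner z (c *\<^sub>R x) = c * Ainner z x"
  "Ainner (- x) z = - Ainner x z" "Ainner z (- x) = - Ainner z x"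
  "Ainner 0 z = 0" "Ainner z 0 = 0"
  using matrix_vector_mult_diff_distrib[of A 0 x]
  by (simp_all add: Ainner_def inner_add_left inner_add_right inner_diff_left inner_diff_right
      matrix_vector_right_distrib matrix_vector_mult_diff_distrib matrix_vector_mult_scaleR)

lemma Ainner_eq_0_iff: "Ainner x x = 0 \<longleftrightarrow> x = 0"
  using Ainner_pos[of x] by (cases "x = 0") (auto simp: Ainner_simps)

lemma Ainner_add_scaleR_self:
  "Ainner (x + t *\<^sub>R y) (x + t *\<^sub>R y) = Ainner x x + 2 * t * Ainner x y + t\<^sup>2 * Ainner y y"
proof -
  have "Ainner (x + t *\<^sub>R y) (x + t *\<^sub>R y)
      = Ainner x x + t * Ainner x y + t * Ainner y x + t * (t * Ainner y y)"
    by (simp add: Ainner_simps distrib_left)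
  then show ?thesis using Ainner_commute[of y x] by (simp add: power2_eq_square algebra_simps)
qed

lemma invertible_A: "invertible A"
proof -
  have "inj ((*v) A)"
  proof (rule injI)
    fix x y assume "A *v x = A *v y"
    then have "Ainner (x - y) (x - y) = 0" by (simp add: Ainner_def matrix_vector_mult_diff_distrib)
    then show "x = y" by (simp add: Ainner_eq_0_iff)
  qed
  then show ?thesis using matrix_left_invertible_injective invertible_left_inverse by blast
qed

definition K :: "'n dmat" where
  "K = matrix_inv A ** J_mat"

lemma A_mult_matrix_inv: "A ** matrix_inv A = mat 1"
proof -
  obtain B where "A ** B = mat 1 \<and> B ** A = mat 1" using invertible_A unfolding invertible_def by blast
  then show ?thesis unfolding matrix_inv_def by (rule someI2[where Q = "\<lambda>B. A ** B = mat 1"]) simp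
qed

lemma Ainner_K: "Ainner x (K *v y) = symp_form x y"
  by (simp add: Ainner_def K_def symp_form_def matrix_vector_mul_assoc matrix_mul_assoc A_mult_matrix_inv)

lemma Ainner_K_left: "Ainner (K *v x) y = - Ainner x (K *v y)"
  by (simp add: Ainner_commute[of "K *v x" y] Ainner_K symp_form_swap[of y x])

lemma K_mult_vec_simps:
  "K *v (x + y) = K *v x + K *v y" "K *v (c *\<^sub>R x) = c *\<^sub>R (K *v x)"
  by (simp_all add: matrix_vector_right_distrib matrix_vector_mult_scaleR)

lemma K_mult_vec_eq_0_iff: "K *v x = 0 \<longleftrightarrow> x = 0"
proof
  assume "K *v x = 0"
  then have "(J_mat *v x) \<bullet> (J_mat *v x) = 0"
    using Ainner_K[of "J_mat *v x" x] by (simp add: symp_form_def Ainner_simps)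
  then show "x = 0" by (simp add: inner_J_mat_J_mat)
qed simp

lemma exists_Rayleigh_maximizer:
  assumes "subspace W" "W \<noteq> {0}"
  obtains x0 l where "x0 \<in> W" "x0 \<noteq> 0" "l > 0"
    "Ainner (K *v x0) (K *v x0) = l * Ainner x0 x0"
    "\<And>z. z \<in> W \<Longrightarrow> Ainner (K *v z) (K *v z) \<le> l * Ainner z z"
proof -
  obtain w where w: "w \<in> W" "w \<noteq> 0" using assms subspace_0 by blast
  define Sph where "Sph = sphere 0 1 \<inter> W"
  define f where "f x = Ainner (K *v x) (K *v x) / Ainner x x" for x
  have Sph_nz: "x \<noteq> 0" if "x \<in> Sph" for x using that by (auto simp: Sph_def)
  have "compact Sph" unfolding Sph_def
    by (rule compact_Int_closed) (auto intro: closed_subspace assms(1))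
  moreover have "(1 / norm w) *\<^sub>R w \<in> Sph" using w assms(1) by (simp add: Sph_def subspace_scale)
  moreover have "continuous_on Sph f"
  proof -
    have "\<forall>x\<in>Sph. x \<bullet> (A *v x) \<noteq> 0" using Sph_nz Ainner_pos unfolding Ainner_def by (metis less_irrefl)
    then show ?thesis unfolding f_def Ainner_def matrix_vector_mul_assoc
      by (intro continuous_on_divide continuous_intros)
  qed
  ultimately obtain x0 where x0: "x0 \<in> Sph" "\<And>y. y \<in> Sph \<Longrightarrow> f y \<le> f x0"
    using continuous_attains_sup[of Sph f] by blast
  have x0W: "x0 \<in> W" and x0_nz: "x0 \<noteq> 0" using x0(1) Sph_nz by (auto simp: Sph_def)
  have "f x0 > 0" unfolding f_def using Ainner_pos x0_nz K_mult_vec_eq_0_iff by simp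
  moreover have "Ainner (K *v x0) (K *v x0) = f x0 * Ainner x0 x0"
    using Ainner_pos[OF x0_nz] by (simp add: f_def)
  moreover have "Ainner (K *v z) (K *v z) \<le> f x0 * Ainner z z" if "z \<in> W" for z
  proof (cases "z = 0")
    case False
    have "(1 / norm z) *\<^sub>R z \<in> Sph" using that False assms(1) by (simp add: Sph_def subspace_scale)
    then have "f ((1 / norm z) *\<^sub>R z) \<le> f x0" using x0(2) by blast
    moreover have "f ((1 / norm z) *\<^sub>R z) = f z" using False by (simp add: f_def K_mult_vec_simps Ainner_simps)
    ultimately have "f z \<le> f x0" by simp
    then show ?thesis using Ainner_pos[OF False] by (simp add: f_def divide_le_eq)
  qed (simp add: Ainner_simps)
  ultimately show ?thesis using that x0W x0_nz by blast
qed

text \<open>The first variation of the Rayleigh quotient at a maximizer vanishes.\<close>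

lemma Rayleigh_maximizer_eigenvector:
  assumes W: "subspace W" "\<forall>x\<in>W. K *v x \<in> W" and "x0 \<in> W"
    and max: "Ainner (K *v x0) (K *v x0) = l * Ainner x0 x0"
      "\<And>z. z \<in> W \<Longrightarrow> Ainner (K *v z) (K *v z) \<le> l * Ainner z z"
  shows "K *v (K *v x0) = (- l) *\<^sub>R x0"
proof -
  have first_variation: "l * Ainner x0 y - Ainner (K *v x0) (K *v y) = 0" if "y \<in> W" for y
  proof -
    let ?b = "l * Ainner x0 y - Ainner (K *v x0) (K *v y)"
    let ?q = "l * Ainner y y - Ainner (K *v y) (K *v y)"
    have "0 \<le> 2 * t * ?b + t\<^sup>2 * ?q" for t
    proof -
      have "x0 + t *\<^sub>R y \<in> W" using W(1) \<open>x0 \<in> W\<close> that by (simp add: subspace_add subspace_scale)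
      then have "0 \<le> l * Ainner (x0 + t *\<^sub>R y) (x0 + t *\<^sub>R y)
          - Ainner (K *v (x0 + t *\<^sub>R y)) (K *v (x0 + t *\<^sub>R y))"
        using max(2) by simp
      also have "\<dots> = l * (Ainner x0 x0 + 2 * t * Ainner x0 y + t\<^sup>2 * Ainner y y)
          - (Ainner (K *v x0) (K *v x0) + 2 * t * Ainner (K *v x0) (K *v y) + t\<^sup>2 * Ainner (K *v y) (K *v y))"
        by (simp only: K_mult_vec_simps Ainner_add_scaleR_self)
      also have "\<dots> = (l * Ainner x0 x0 - Ainner (K *v x0) (K *v x0)) + 2 * t * ?b + t\<^sup>2 * ?q"
        by (simp add: algebra_simps)
      also have "\<dots> = 2 * t * ?b + t\<^sup>2 * ?q" using max(1) by simp
      finally show ?thesis .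
    qed
    then show ?thesis by (rule linear_coeff_eq_0_if_quadratic_nonneg)
  qed
  define y where "y = l *\<^sub>R x0 + K *v (K *v x0)"
  have "y \<in> W" using W \<open>x0 \<in> W\<close> by (simp add: y_def subspace_add subspace_scale)
  have "Ainner y z = l * Ainner x0 z - Ainner (K *v x0) (K *v z)" for z
    using Ainner_K_left[of "K *v x0" z] by (simp add: y_def Ainner_simps)
  then have "Ainner y y = 0" using first_variation[OF \<open>y \<in> W\<close>] by simp
  then have "K *v (K *v x0) + l *\<^sub>R x0 = 0" by (simp add: Ainner_eq_0_iff y_def add.commute)
  then show ?thesis by (simp add: eq_neg_iff_add_eq_0)
qed

text \<open>A normal pair \<open>(u, v, d)\<close> becomes a pair of columns \<open>Inl j\<close>, \<open>Inr j\<close> of the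
  Williamson matrix \<open>S\<close>, with \<open>d\<close> the corresponding symplectic eigenvalue.\<close>

definition pair_u :: "'v \<times> 'v \<times> real \<Rightarrow> 'v" where "pair_u t = fst t"
definition pair_v :: "'v \<times> 'v \<times> real \<Rightarrow> 'v" where "pair_v t = fst (snd t)"
definition pair_d :: "'v \<times> 'v \<times> real \<Rightarrow> real" where "pair_d t = snd (snd t)"

lemma pair_simps [simp]: "pair_u (u, v, d) = u" "pair_v (u, v, d) = v" "pair_d (u, v, d) = d"
  by (simp_all add: pair_u_def pair_v_def pair_d_def)

definition pair_vectors :: "('v \<times> 'v \<times> real) list \<Rightarrow> 'v set" where
  "pair_vectors ps = pair_u ` set ps \<union> pair_v ` set ps"

definition normal_pair :: "(real^('n + 'n)) \<times> (real^('n + 'n)) \<times> real \<Rightarrow> bool" where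
  "normal_pair t \<longleftrightarrow> pair_d t > 0 \<and> Ainner (pair_u t) (pair_u t) = pair_d t
     \<and> Ainner (pair_v t) (pair_v t) = pair_d t \<and> Ainner (pair_u t) (pair_v t) = 0
     \<and> symp_form (pair_u t) (pair_v t) = 1"

definition orthogonal_pairs where
  "orthogonal_pairs t t' \<longleftrightarrow>
     (\<forall>p\<in>{pair_u t, pair_v t}. \<forall>q\<in>{pair_u t', pair_v t'}. Ainner p q = 0 \<and> symp_form p q = 0)"

fun normal_family where
  "normal_family [] = True"
| "normal_family (t # ts) = (normal_pair t \<and> (\<forall>t'\<in>set ts. orthogonal_pairs t t') \<and> normal_family ts)"

lemma normal_pair_of_eigenvector:
  assumes "x0 \<noteq> 0" "l > 0" "K *v (K *v x0) = (- l) *\<^sub>R x0"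
  obtains u v d s where "normal_pair (u, v, d)" "s > 0" "v \<in> span {x0}"
    "K *v v = s *\<^sub>R u" "K *v u = (- s) *\<^sub>R v"
proof -
  define s where "s = sqrt l"
  define c where "c = Ainner x0 x0"
  have s_pos: "s > 0" and s_sq: "s * s = l" using assms(2) by (simp_all add: s_def)
  have c_pos: "c > 0" using Ainner_pos assms(1) by (simp add: c_def)
  define v where "v = (1 / sqrt (s * c)) *\<^sub>R x0"
  define u where "u = (1 / s) *\<^sub>R (K *v v)"
  define d where "d = 1 / s"
  have KKv: "K *v (K *v v) = (- l) *\<^sub>R v" using assms(3) by (simp add: v_def K_mult_vec_simps)
  have Kv: "K *v v = s *\<^sub>R u" using s_pos by (simp add: u_def)
  have "l / s = s" using s_pos s_sq by (simp add: field_simps)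
  then have Ku: "K *v u = (- s) *\<^sub>R v" by (simp add: u_def K_mult_vec_simps KKv)
  have avv: "Ainner v v = d"
    using s_pos c_pos by (simp add: v_def d_def Ainner_simps c_def[symmetric] field_simps)
  have aKvKv: "Ainner (K *v v) (K *v v) = l * d"
    using Ainner_K_left[of v "K *v v"] by (simp add: KKv Ainner_simps avv)
  have "Ainner u u = (l / (s * s)) * d" by (simp add: u_def Ainner_simps aKvKv)
  then have "Ainner u u = d" using s_sq assms(2) by simp
  moreover have "Ainner u v = 0"
    using Ainner_K_left[of v v] Ainner_commute[of v "K *v v"] by (simp add: u_def Ainner_simps)
  moreover have "symp_form u v = 1" using s_sq s_pos assms(2)
    by (simp add: Ainner_K[symmetric] u_def Ainner_simps aKvKv d_def field_simps)
  moreover have "v \<in> span {x0}" by (simp add: v_def span_base span_scale)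
  ultimately show ?thesis
    using s_pos avv Kv Ku by (intro that[of u v d s]) (auto simp: normal_pair_def d_def)
qed

lemma Ainner_orthogonal_to_pair:
  assumes Kv: "K *v v = s *\<^sub>R u" and Ku: "K *v u = (- s) *\<^sub>R v"
    and zu: "Ainner z u = 0" and zv: "Ainner z v = 0"
  shows "Ainner (K *v z) u = 0" "Ainner (K *v z) v = 0" "symp_form u z = 0" "symp_form v z = 0"
proof -
  show "Ainner (K *v z) u = 0" using Ainner_K_left[of z u] by (simp add: Ku Ainner_simps zv)
  show "Ainner (K *v z) v = 0" using Ainner_K_left[of z v] by (simp add: Kv Ainner_simps zu)
  have "symp_form u z = - Ainner (K *v u) z" using Ainner_K_left[of u z] by (simp add: Ainner_K)
  also have "\<dots> = s * Ainner z v" by (simp add: Ku Ainner_simps Ainner_commute[of v z])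
  finally show "symp_form u z = 0" using zv by simp
  have "symp_form v z = - Ainner (K *v v) z" using Ainner_K_left[of v z] by (simp add: Ainner_K)
  also have "\<dots> = - s * Ainner z u" by (simp add: Kv Ainner_simps Ainner_commute[of u z])
  finally show "symp_form v z = 0" using zu by simp
qed

lemma orthogonal_pairs_if_Ainner_orthogonal:
  assumes Kv: "K *v v = s *\<^sub>R u" and Ku: "K *v u = (- s) *\<^sub>R v"
    and orth: "\<And>q. q \<in> {pair_u t', pair_v t'} \<Longrightarrow> Ainner q u = 0 \<and> Ainner q v = 0"
  shows "orthogonal_pairs (u, v, d) t'"
  unfolding orthogonal_pairs_def
proof (intro ballI)
  fix p q assume "p \<in> {pair_u (u, v, d), pair_v (u, v, d)}" "q \<in> {pair_u t', pair_v t'}"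
  then show "Ainner p q = 0 \<and> symp_form p q = 0"
    using orth[of q] Ainner_orthogonal_to_pair[OF Kv Ku, of q] Ainner_commute[of q u] Ainner_commute[of q v]
    by auto
qed

lemma normal_pair_project:
  assumes "normal_pair (u, v, d)"
  shows "Ainner (z - (Ainner z u / d) *\<^sub>R u - (Ainner z v / d) *\<^sub>R v) u = 0"
    "Ainner (z - (Ainner z u / d) *\<^sub>R u - (Ainner z v / d) *\<^sub>R v) v = 0"
proof -
  have "d > 0" "Ainner u u = d" "Ainner v v = d" "Ainner u v = 0" "Ainner v u = 0"
    using assms Ainner_commute[of v u] by (auto simp: normal_pair_def)
  then show "Ainner (z - (Ainner z u / d) *\<^sub>R u - (Ainner z v / d) *\<^sub>R v) u = 0"
    "Ainner (z - (Ainner z u / d) *\<^sub>R u - (Ainner z v / d) *\<^sub>R v) v = 0"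
    by (simp_all add: Ainner_simps)
qed

lemma normal_pair_complement:
  assumes W: "subspace W" "\<forall>x\<in>W. K *v x \<in> W"
    and uvd: "normal_pair (u, v, d)" "u \<in> W" "v \<in> W"
    and Kv: "K *v v = s *\<^sub>R u" and Ku: "K *v u = (- s) *\<^sub>R v"
  defines "W' \<equiv> {z \<in> W. Ainner z u = 0 \<and> Ainner z v = 0}"
  shows "subspace W'" "\<forall>x\<in>W'. K *v x \<in> W'" "dim W' < dim W"
    "W \<subseteq> span (insert u (insert v W'))"
proof -
  show sub: "subspace W'" using W(1) unfolding W'_def subspace_def by (auto simp: Ainner_simps)
  show "\<forall>x\<in>W'. K *v x \<in> W'" using W(2) Ainner_orthogonal_to_pair[OF Kv Ku] by (auto simp: W'_def)
  have "v \<notin> W'" using uvd(1) by (simp add: W'_def normal_pair_def)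
  then have "W' \<subset> W" using uvd(3) by (auto simp: W'_def)
  then show "dim W' < dim W" using sub W(1) by (metis dim_psubset span_eq_iff)
  show "W \<subseteq> span (insert u (insert v W'))"
  proof
    fix z assume "z \<in> W"
    define z' where "z' = z - (Ainner z u / d) *\<^sub>R u - (Ainner z v / d) *\<^sub>R v"
    have "z' \<in> W" using \<open>z \<in> W\<close> uvd(2,3) W(1) by (simp add: z'_def subspace_diff subspace_scale)
    then have "z' \<in> W'" using normal_pair_project[OF uvd(1)] by (simp add: W'_def z'_def)
    then have "z' + (Ainner z u / d) *\<^sub>R u + (Ainner z v / d) *\<^sub>R v \<in> span (insert u (insert v W'))"
      by (intro span_add span_scale) (auto intro: span_base)
    then show "z \<in> span (insert u (insert v W'))" by (simp add: z'_def)
  qed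
qed

lemma exists_normal_family:
  assumes "subspace W" "\<forall>x\<in>W. K *v x \<in> W"
  shows "\<exists>ps. normal_family ps \<and> pair_vectors ps \<subseteq> W \<and> W \<subseteq> span (pair_vectors ps)"
  using assms
proof (induction "dim W" arbitrary: W rule: less_induct)
  case less
  show ?case
  proof (cases "W = {0}")
    case True
    then show ?thesis by (intro exI[of _ "[]"]) (simp add: pair_vectors_def)
  next
    case False
    obtain x0 l where x0: "x0 \<in> W" "x0 \<noteq> 0" "l > 0"
      and max: "Ainner (K *v x0) (K *v x0) = l * Ainner x0 x0"
        "\<And>z. z \<in> W \<Longrightarrow> Ainner (K *v z) (K *v z) \<le> l * Ainner z z"
      using exists_Rayleigh_maximizer[OF less.prems(1) False] by blast
    have "K *v (K *v x0) = (- l) *\<^sub>R x0" using Rayleigh_maximizer_eigenvector[OF less.prems x0(1) max] .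
    then obtain u v d s where uvd: "normal_pair (u, v, d)" "s > 0" "v \<in> span {x0}"
      and Kv: "K *v v = s *\<^sub>R u" and Ku: "K *v u = (- s) *\<^sub>R v"
      using normal_pair_of_eigenvector x0(2,3) by metis
    have vW: "v \<in> W" using uvd(3) span_minimal[of "{x0}" W] x0(1) less.prems(1) by auto
    have "u = (1 / s) *\<^sub>R (K *v v)" using uvd(2) by (simp add: Kv)
    then have uW: "u \<in> W" using vW less.prems by (simp add: subspace_scale)
    define W' where "W' = {z \<in> W. Ainner z u = 0 \<and> Ainner z v = 0}"
    note W' = normal_pair_complement[OF less.prems uvd(1) uW vW Kv Ku, folded W'_def]
    obtain ps' where ps': "normal_family ps'" "pair_vectors ps' \<subseteq> W'" "W' \<subseteq> span (pair_vectors ps')"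
      using less.hyps[OF W'(3) W'(1,2)] by blast
    have "orthogonal_pairs (u, v, d) t'" if "t' \<in> set ps'" for t'
      using ps'(2) that by (intro orthogonal_pairs_if_Ainner_orthogonal[OF Kv Ku])
        (auto simp: pair_vectors_def W'_def)
    then have "normal_family ((u, v, d) # ps')" using uvd(1) ps'(1) by simp
    moreover have "pair_vectors ((u, v, d) # ps') \<subseteq> W"
      using ps'(2) uW vW by (auto simp: pair_vectors_def W'_def)
    moreover have "W \<subseteq> span (pair_vectors ((u, v, d) # ps'))"
    proof -
      let ?P = "pair_vectors ((u, v, d) # ps')"
      have "pair_vectors ps' \<subseteq> ?P" by (auto simp: pair_vectors_def)
      then have "W' \<subseteq> span ?P" using ps'(3) span_mono by blast
      moreover have "u \<in> span ?P" "v \<in> span ?P" by (simp_all add: pair_vectors_def span_base)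
      ultimately have "span (insert u (insert v W')) \<subseteq> span ?P"
        by (intro span_minimal) auto
      then show ?thesis using W'(4) by blast
    qed
    ultimately show ?thesis by blast
  qed
qed

lemma orthogonal_pairs_sym: "orthogonal_pairs t t' \<Longrightarrow> orthogonal_pairs t' t"
  unfolding orthogonal_pairs_def using Ainner_commute symp_form_swap by (metis neg_equal_0_iff_equal)

lemma normal_family_nth: "normal_family ps \<Longrightarrow> i < length ps \<Longrightarrow> normal_pair (ps ! i)"
  by (induction ps arbitrary: i) (auto simp: nth_Cons split: nat.splits)

lemma normal_family_nth_orthogonal:
  assumes "normal_family ps" "i < length ps" "j < length ps" "i \<noteq> j"
  shows "orthogonal_pairs (ps ! i) (ps ! j)"
proof -
  have "orthogonal_pairs (ps ! i) (ps ! j)" if "normal_family ps" "i < j" "j < length ps" for i j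
    using that
  proof (induction ps arbitrary: i j)
    case (Cons t ts)
    then show ?case by (cases i; cases j) auto
  qed simp
  then show ?thesis using assms orthogonal_pairs_sym by (metis linorder_neq_iff)
qed

definition pair_vec :: "((real^('n + 'n)) \<times> (real^('n + 'n)) \<times> real) list \<Rightarrow> nat \<times> bool \<Rightarrow> real^('n + 'n)"
  where "pair_vec ps ib = (if snd ib then pair_u (ps ! fst ib) else pair_v (ps ! fst ib))"

lemma Ainner_pair_vec:
  assumes "normal_family ps" "i < length ps" "j < length ps"
  shows "Ainner (pair_vec ps (i, b)) (pair_vec ps (j, b')) = (if i = j \<and> b = b' then pair_d (ps ! i) else 0)"
proof (cases "i = j")
  case True
  then show ?thesis using normal_family_nth[OF assms(1,2)] Ainner_commute[of "pair_u (ps ! i)" "pair_v (ps ! i)"]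
    by (auto simp: pair_vec_def normal_pair_def)
next
  case False
  then show ?thesis using normal_family_nth_orthogonal[OF assms False] by (auto simp: pair_vec_def orthogonal_pairs_def)
qed

lemma symp_form_pair_vec:
  assumes "normal_family ps" "i < length ps" "j < length ps"
  shows "symp_form (pair_vec ps (i, True)) (pair_vec ps (j, False)) = (if i = j then 1 else 0)"
    "symp_form (pair_vec ps (i, False)) (pair_vec ps (j, True)) = (if i = j then -1 else 0)"
    "symp_form (pair_vec ps (i, b)) (pair_vec ps (j, b)) = 0"
proof -
  have uv: "symp_form (pair_u (ps ! i)) (pair_v (ps ! i)) = 1"
    using normal_family_nth[OF assms(1,2)] by (simp add: normal_pair_def)
  have orth: "orthogonal_pairs (ps ! i) (ps ! j)" if "i \<noteq> j"
    using normal_family_nth_orthogonal[OF assms that] .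
  show "symp_form (pair_vec ps (i, True)) (pair_vec ps (j, False)) = (if i = j then 1 else 0)"
    using uv orth by (auto simp: pair_vec_def orthogonal_pairs_def)
  show "symp_form (pair_vec ps (i, False)) (pair_vec ps (j, True)) = (if i = j then -1 else 0)"
    using uv orth symp_form_swap[of "pair_v (ps ! i)"] by (auto simp: pair_vec_def orthogonal_pairs_def)
  show "symp_form (pair_vec ps (i, b)) (pair_vec ps (j, b)) = 0"
    using orth by (cases "i = j") (auto simp: pair_vec_def orthogonal_pairs_def)
qed

lemma Ainner_orthogonal_independent:
  assumes "\<forall>x\<in>V. Ainner x x > 0" "\<forall>x\<in>V. \<forall>y\<in>V. x \<noteq> y \<longrightarrow> Ainner x y = 0"
  shows "independent V"
proof
  assume "dependent V"
  then obtain x where x: "x \<in> V" "x \<in> span (V - {x})" unfolding dependent_def by blast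
  have "subspace {z. Ainner z x = 0}" unfolding subspace_def by (auto simp: Ainner_simps)
  moreover have "V - {x} \<subseteq> {z. Ainner z x = 0}" using assms(2) x(1) by auto
  ultimately have "span (V - {x}) \<subseteq> {z. Ainner z x = 0}" by (rule span_minimal[rotated])
  then show False using assms(1) x by force
qed

lemma pair_vec_image: "pair_vec ps ` ({..<length ps} \<times> UNIV) = pair_vectors ps"
proof
  show "pair_vec ps ` ({..<length ps} \<times> UNIV) \<subseteq> pair_vectors ps"
    by (auto simp: pair_vectors_def pair_vec_def)
  show "pair_vectors ps \<subseteq> pair_vec ps ` ({..<length ps} \<times> UNIV)"
  proof
    fix y assume "y \<in> pair_vectors ps"
    then obtain i where "i < length ps" "y = pair_u (ps ! i) \<or> y = pair_v (ps ! i)"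
      by (auto simp: pair_vectors_def in_set_conv_nth)
    then have "y = pair_vec ps (i, True) \<or> y = pair_vec ps (i, False)"
      "(i, True) \<in> {..<length ps} \<times> UNIV" "(i, False) \<in> {..<length ps} \<times> UNIV"
      by (auto simp: pair_vec_def)
    then show "y \<in> pair_vec ps ` ({..<length ps} \<times> UNIV)" by blast
  qed
qed

lemma normal_family_independent:
  assumes ps: "normal_family ps"
  shows "independent (pair_vectors ps)" "card (pair_vectors ps) = 2 * length ps"
proof -
  define I where "I = {..<length ps} \<times> (UNIV :: bool set)"
  have Ainner_I: "Ainner (pair_vec ps x) (pair_vec ps y) = (if x = y then pair_d (ps ! fst x) else 0)"
    if "x \<in> I" "y \<in> I" for x y
    using Ainner_pair_vec[OF ps, of "fst x" "fst y" "snd x" "snd y"] that by (auto simp: I_def prod_eq_iff)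
  have pos: "Ainner (pair_vec ps x) (pair_vec ps x) > 0" if "x \<in> I" for x
    using Ainner_I[OF that that] normal_family_nth[OF ps] that by (auto simp: I_def normal_pair_def)
  have inj: "inj_on (pair_vec ps) I"
  proof (rule inj_onI, rule ccontr)
    fix x y assume xy: "x \<in> I" "y \<in> I" "pair_vec ps x = pair_vec ps y" "x \<noteq> y"
    then have "Ainner (pair_vec ps x) (pair_vec ps x) = 0" using Ainner_I[OF xy(1,2)] by simp
    then show False using pos[OF xy(1)] by simp
  qed
  have "independent (pair_vec ps ` I)"
  proof (rule Ainner_orthogonal_independent)
    show "\<forall>z\<in>pair_vec ps ` I. Ainner z z > 0" using pos by blast
    show "\<forall>z\<in>pair_vec ps ` I. \<forall>z'\<in>pair_vec ps ` I. z \<noteq> z' \<longrightarrow> Ainner z z' = 0"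
      using Ainner_I by fastforce
  qed
  then show "independent (pair_vectors ps)" by (simp add: I_def pair_vec_image)
  show "card (pair_vectors ps) = 2 * length ps"
    using card_image[OF inj] by (simp add: I_def pair_vec_image card_cartesian_product)
qed

lemma normal_family_length:
  assumes ps: "normal_family ps" "UNIV \<subseteq> span (pair_vectors ps)"
  shows "length ps = CARD('n)"
proof -
  have "dim (span (pair_vectors ps)) = card (pair_vectors ps)"
    by (rule dim_span_eq_card_independent[OF normal_family_independent(1)[OF ps(1)]])
  then have "dim (span (pair_vectors ps)) = 2 * length ps"
    using normal_family_independent(2)[OF ps(1)] by simp
  moreover have "span (pair_vectors ps) = UNIV" using ps(2) by auto
  ultimately show ?thesis using dim_UNIV[where 'a = "real^('n + 'n)"] card_UNIV_Plus_self[where 'n = 'n] by simp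
qed

lemma williamson_of_normal_family:
  assumes ps: "normal_family ps" and len: "length ps = CARD('n)"
  shows "\<exists>S d. williamson A S d"
proof -
  obtain h where h: "bij_betw h (UNIV :: 'n set) {..<CARD('n)}"
    using ex_bij_betw_finite_nat[of "UNIV :: 'n set"] by (auto simp: atLeast0LessThan)
  have h_lt: "h j < length ps" for j using h len by (auto simp: bij_betw_def)
  have h_eq: "h i = h j \<longleftrightarrow> i = j" for i j using h by (auto simp: bij_betw_def inj_on_def)
  define col where "col p = (case p of Inl j \<Rightarrow> pair_vec ps (h j, True) | Inr j \<Rightarrow> pair_vec ps (h j, False))" for p
  define S :: "'n dmat" where "S = (\<chi> p q. col q $ p)"
  define d :: "real^'n" where "d = (\<chi> j. pair_d (ps ! h j))"
  have column_S: "column q S = col q" for q by (simp add: S_def column_def vec_eq_iff)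
  have "(transpose S ** J_mat ** S) $ p $ q = J_mat $ p $ q" for p q
    unfolding transpose_mult_mult_nth column_S symp_form_def[symmetric]
    by (cases p; cases q) (simp_all add: col_def symp_form_pair_vec[OF ps] h_lt J_mat_nth h_eq)
  moreover have "(transpose S ** A ** S) $ p $ q = blockdiag d $ p $ q" for p q
    unfolding transpose_mult_mult_nth column_S Ainner_def[symmetric]
    by (cases p; cases q) (simp_all add: col_def Ainner_pair_vec[OF ps] h_lt blockdiag_def d_def h_eq)
  moreover have "d $ j > 0" for j using normal_family_nth[OF ps h_lt] by (simp add: d_def normal_pair_def)
  ultimately show ?thesis unfolding williamson_def symplectic_def by (metis vec_eq_iff)
qed

theorem williamson_exists: "\<exists>S d. williamson A S d"
proof -
  obtain ps where "normal_family ps" "UNIV \<subseteq> span (pair_vectors ps)"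
    using exists_normal_family[of UNIV] by auto
  then show ?thesis using williamson_of_normal_family normal_family_length by blast
qed

end

section \<open>Uniqueness of the symplectic eigenvalues\<close>

lemma J_mat_blockdiag_squared:
  "(J_mat ** blockdiag d) ** (J_mat ** blockdiag d) = - blockdiag (\<chi> j. (d $ j)\<^sup>2 :: real^'n::finite)"
proof (rule matrix_eq[THEN iffD2], intro allI)
  fix x :: "real^('n + 'n)"
  have "- blockdiag (\<chi> j. (d $ j)\<^sup>2) *v x = - (blockdiag (\<chi> j. (d $ j)\<^sup>2) *v x)"
    by (simp add: matrix_vector_mult_def vec_eq_iff sum_negf)
  then show "((J_mat ** blockdiag d) ** (J_mat ** blockdiag d)) *v x = - blockdiag (\<chi> j. (d $ j)\<^sup>2) *v x"
    by (simp add: matrix_vector_mul_assoc[symmetric] vec_Plus_eq_iff J_mat_mult_vec blockdiag_mult_vec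
        power2_eq_square)
qed

lemma williamson_J_mat_mult:
  assumes "williamson A S d"
  shows "- ((J_mat ** A) ** (J_mat ** A)) ** S = S ** blockdiag (\<chi> j. (d $ j)\<^sup>2)"
proof -
  have sy: "symplectic S" and D: "transpose S ** A ** S = blockdiag d"
    using assms by (auto simp: williamson_def)
  have "symplectic_inverse (transpose S) ** transpose S = mat 1"
    using symplectic_inverse(1)[OF symplectic_transpose[OF sy]] .
  then have AS: "A ** S = symplectic_inverse (transpose S) ** blockdiag d"
    by (metis D matrix_mul_assoc matrix_mul_lid)
  have JAS: "(J_mat ** A) ** S = S ** (J_mat ** blockdiag d)"
  proof -
    have "(J_mat ** A) ** S = J_mat ** symplectic_inverse (transpose S) ** blockdiag d"
      by (simp add: AS flip: matrix_mul_assoc)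
    also have "\<dots> = - ((J_mat ** J_mat) ** S ** J_mat ** blockdiag d)"
      by (simp add: symplectic_inverse_def matrix_mul_uminus_left matrix_mul_uminus_right matrix_mul_assoc)
    also have "\<dots> = S ** (J_mat ** blockdiag d)"
      by (simp add: J_mat_squared matrix_mul_uminus_left matrix_mul_assoc)
    finally show ?thesis .
  qed
  have "((J_mat ** A) ** (J_mat ** A)) ** S = S ** ((J_mat ** blockdiag d) ** (J_mat ** blockdiag d))"
    by (metis JAS matrix_mul_assoc)
  then show ?thesis by (simp add: matrix_mul_uminus_left matrix_mul_uminus_right J_mat_blockdiag_squared)
qed

lemma dim_eigenspace_similar:
  fixes M D S :: "real^'m::finite^'m"
  assumes MS: "M ** S = S ** D" and "invertible S"
  shows "dim {x. M *v x = \<mu> *\<^sub>R x} = dim {z. D *v z = \<mu> *\<^sub>R z}"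
proof -
  obtain S' where S': "S' ** S = mat 1" "S ** S' = mat 1" using assms(2) invertible_def by blast
  have S'M: "S' ** M = D ** S'" using MS S' by (metis matrix_mul_assoc matrix_mul_lid matrix_mul_rid)
  have "{x. M *v x = \<mu> *\<^sub>R x} = (*v) S ` {z. D *v z = \<mu> *\<^sub>R z}"
  proof (intro set_eqI iffI)
    fix x assume "x \<in> {x. M *v x = \<mu> *\<^sub>R x}"
    then have "M *v x = \<mu> *\<^sub>R x" by simp
    have "D *v (S' *v x) = S' *v (M *v x)" by (simp add: matrix_vector_mul_assoc S'M)
    then have "D *v (S' *v x) = \<mu> *\<^sub>R (S' *v x)"
      by (simp add: \<open>M *v x = \<mu> *\<^sub>R x\<close> matrix_vector_mult_scaleR)
    moreover have "x = S *v (S' *v x)" by (simp add: matrix_vector_mul_assoc S'(2))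
    ultimately show "x \<in> (*v) S ` {z. D *v z = \<mu> *\<^sub>R z}" by blast
  next
    fix x assume "x \<in> (*v) S ` {z. D *v z = \<mu> *\<^sub>R z}"
    then obtain z where z: "D *v z = \<mu> *\<^sub>R z" "x = S *v z" by blast
    have "M *v (S *v z) = S *v (D *v z)" by (simp add: matrix_vector_mul_assoc MS)
    then show "x \<in> {x. M *v x = \<mu> *\<^sub>R x}" by (simp add: z matrix_vector_mult_scaleR)
  qed
  also have "dim \<dots> = dim {z. D *v z = \<mu> *\<^sub>R z}"
  proof (rule dim_image_eq[OF matrix_vector_mul_linear])
    show "inj_on ((*v) S) (span {z. D *v z = \<mu> *\<^sub>R z})"
      by (rule inj_onI) (metis S'(1) matrix_vector_mul_assoc matrix_vector_mul_lid)
  qed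
  finally show ?thesis .
qed

lemma dim_eigenspace_blockdiag:
  fixes e :: "real^'n::finite"
  shows "dim {z. blockdiag e *v z = \<mu> *\<^sub>R z} = 2 * card {j. e $ j = (\<mu>::real)}"
proof -
  define Q where "Q = Inl ` {j. e $ j = \<mu>} \<union> Inr ` {j. e $ j = \<mu>}"
  have "{z. blockdiag e *v z = \<mu> *\<^sub>R z} = {z. \<forall>i. i \<notin> Q \<longrightarrow> z $ i = 0}"
    by (auto simp: Q_def vec_Plus_eq_iff blockdiag_mult_vec split_sum_all)
  moreover have "dim {z::real^('n + 'n). \<forall>i. i \<notin> Q \<longrightarrow> z $ i = 0} = card Q"
    unfolding dim_vec_eq[symmetric] by (rule dim_substandard_cart)
  ultimately have "dim {z. blockdiag e *v z = \<mu> *\<^sub>R z} = card Q" by simp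
  also have "\<dots> = 2 * card {j. e $ j = \<mu>}"
    unfolding Q_def by (subst card_Un_disjoint) (auto simp: card_image)
  finally show ?thesis .
qed

lemma williamson_eigenspace_dim:
  assumes "williamson A S d"
  shows "dim {x. - ((J_mat ** A) ** (J_mat ** A)) *v x = \<mu> *\<^sub>R x} = 2 * card {j. (d $ j)\<^sup>2 = \<mu>}"
proof -
  have "symplectic S" using assms by (simp add: williamson_def)
  then have "dim {x. - ((J_mat ** A) ** (J_mat ** A)) *v x = \<mu> *\<^sub>R x}
      = dim {z. blockdiag (\<chi> j. (d $ j)\<^sup>2) *v z = \<mu> *\<^sub>R z}"
    by (rule dim_eigenspace_similar[OF williamson_J_mat_mult[OF assms] symplectic_invertible])
  also have "\<dots> = 2 * card {j. (d $ j)\<^sup>2 = \<mu>}" by (simp add: dim_eigenspace_blockdiag)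
  finally show ?thesis .
qed

lemma incr_eq_if_counts_eq:
  fixes x y :: "real^'n::finite"
  assumes "\<And>v. card {j. x $ j = v} = card {j. y $ j = v}"
  shows "incr x = incr y"
proof -
  have "image_mset (\<lambda>i. x $ i) (mset_set (UNIV::'n set)) = image_mset (\<lambda>i. y $ i) (mset_set UNIV)"
    using assms by (intro multiset_eqI) (simp add: count_image_mset' eq_commute)
  then show ?thesis by (simp add: incr_def)
qed

lemma williamson_incr_unique:
  assumes "williamson A S d" "williamson A S' e"
  shows "incr d = incr e"
proof (rule incr_eq_if_counts_eq)
  fix v :: real
  have pos: "\<forall>i. d $ i > 0" "\<forall>i. e $ i > 0" using assms by (auto simp: williamson_def)
  have squares: "card {j. (d $ j)\<^sup>2 = \<mu>} = card {j. (e $ j)\<^sup>2 = \<mu>}" for \<mu>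
    using williamson_eigenspace_dim[OF assms(1)] williamson_eigenspace_dim[OF assms(2)] by simp
  then show "card {j. d $ j = v} = card {j. e $ j = v}"
  proof (cases "v > 0")
    case True
    have "{j. d $ j = v} = {j. (d $ j)\<^sup>2 = v\<^sup>2}" "{j. e $ j = v} = {j. (e $ j)\<^sup>2 = v\<^sup>2}"
      using pos True by (auto simp: less_imp_le)
    then show ?thesis using squares by simp
  next
    case False
    then have "{j. d $ j = v} = {}" "{j. e $ j = v} = {}" using pos by force+
    then show ?thesis by simp
  qed
qed

lemma symp_eigs_williamson: "williamson A S d \<Longrightarrow> symp_eigs A = incr d"
  unfolding symp_eigs_def by (rule the_equality) (use williamson_incr_unique in blast)+

section \<open>A trace inequality\<close>

lemma williamson_congruence:
  assumes "williamson A S d"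
  shows "A = transpose (symplectic_inverse S) ** blockdiag d ** symplectic_inverse S"
proof -
  let ?X = "symplectic_inverse S"
  have sy: "symplectic S" and D: "transpose S ** A ** S = blockdiag d"
    using assms by (auto simp: williamson_def)
  have "transpose ?X ** transpose S = mat 1"
    using symplectic_inverse(2)[OF sy] by (metis matrix_transpose_mul transpose_mat)
  moreover have "transpose ?X ** blockdiag d ** ?X = (transpose ?X ** transpose S) ** A ** (S ** ?X)"
    by (simp add: D[symmetric] matrix_mul_assoc)
  ultimately show ?thesis using symplectic_inverse(2)[OF sy] by simp
qed

lemma diag_transpose_blockdiag_mult:
  fixes X :: "'n::finite dmat"
  shows "(transpose X ** blockdiag d ** X) $ p $ p = (\<Sum>j\<in>UNIV. d $ j * ((X $ Inl j $ p)\<^sup>2 + (X $ Inr j $ p)\<^sup>2))"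
  unfolding transpose_mult_mult_nth
  by (simp add: inner_Plus blockdiag_mult_vec column_def power2_eq_square sum.distrib[symmetric]
      algebra_simps)

lemma trace_williamson:
  assumes "williamson A S d"
  defines "X \<equiv> symplectic_inverse S"
  shows "trace A = 2 * (\<Sum>j\<in>UNIV. d $ j)
     + (\<Sum>j\<in>UNIV. d $ j * (norm (row (Inl j) X - J_mat *v row (Inr j) X))\<^sup>2)"
proof -
  have sy: "symplectic X"
    using assms(1) unfolding X_def williamson_def by (simp add: symplectic_symplectic_inverse)
  have "trace A = (\<Sum>p\<in>UNIV. \<Sum>j\<in>UNIV. d $ j * ((X $ Inl j $ p)\<^sup>2 + (X $ Inr j $ p)\<^sup>2))"
    by (subst williamson_congruence[OF assms(1)]) (simp add: trace_def X_def diag_transpose_blockdiag_mult)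
  also have "\<dots> = (\<Sum>j\<in>UNIV. d $ j * (row (Inl j) X \<bullet> row (Inl j) X + row (Inr j) X \<bullet> row (Inr j) X))"
    by (subst sum.swap) (simp add: inner_vec_def row_def power2_eq_square sum_distrib_left sum.distrib[symmetric])
  also have "\<dots> = (\<Sum>j\<in>UNIV. 2 * d $ j + d $ j * (norm (row (Inl j) X - J_mat *v row (Inr j) X))\<^sup>2)"
  proof (rule sum.cong[OF refl])
    fix j
    have "row (Inl j) X \<bullet> (J_mat *v row (Inr j) X) = 1"
      using symplectic_rows_inner_J_mat[OF sy] by (simp add: J_mat_nth)
    then show "d $ j * (row (Inl j) X \<bullet> row (Inl j) X + row (Inr j) X \<bullet> row (Inr j) X)
        = 2 * d $ j + d $ j * (norm (row (Inl j) X - J_mat *v row (Inr j) X))\<^sup>2"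
      by (simp add: power2_norm_eq_inner inner_J_mat_J_mat
          inner_commute[of "J_mat *v _" "row _ X"] algebra_simps)
  qed
  also have "\<dots> = 2 * (\<Sum>j\<in>UNIV. d $ j) + (\<Sum>j\<in>UNIV. d $ j * (norm (row (Inl j) X - J_mat *v row (Inr j) X))\<^sup>2)"
    by (simp add: sum.distrib sum_distrib_left)
  finally show ?thesis .
qed

lemma trace_ge_williamson:
  assumes "williamson A S d"
  shows "trace A \<ge> 2 * (\<Sum>j\<in>UNIV. d $ j)"
proof -
  have "\<forall>j. d $ j > 0" using assms by (simp add: williamson_def)
  then show ?thesis
    unfolding trace_williamson[OF assms] by (simp add: sum_nonneg less_imp_le)
qed

lemma symplectic_mult_transpose_if_rows_paired:
  fixes X :: "'n::finite dmat"
  assumes sy: "symplectic X" and paired: "\<And>j. row (Inl j) X = J_mat *v row (Inr j) X"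
  shows "X ** transpose X = mat 1"
proof -
  have paired': "row (Inr j) X = - (J_mat *v row (Inl j) X)" for j
    by (simp add: paired J_mat_mult_J_mat_mult_vec)
  note rows = symplectic_rows_inner_J_mat[OF sy]
  have "row p X \<bullet> row q X = mat 1 $ p $ q" for p q
  proof (cases q)
    case (Inl k)
    then show ?thesis using rows[of p "Inr k"] by (cases p) (simp_all add: paired[of k] J_mat_nth mat_def)
  next
    case (Inr k)
    then show ?thesis using rows[of p "Inl k"] by (cases p) (simp_all add: paired'[of k] J_mat_nth mat_def)
  qed
  then show ?thesis by (simp add: matrix_mult_transpose_dot_row vec_eq_iff)
qed

lemma orthogonal_if_trace_eq_williamson:
  assumes W: "williamson A S d" and eq: "trace A = 2 * (\<Sum>j\<in>UNIV. d $ j)"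
  shows "orthogonal_matrix S"
proof -
  let ?X = "symplectic_inverse S"
  have sy: "symplectic S" and d_pos: "\<forall>j. d $ j > 0" using W by (auto simp: williamson_def)
  have "(\<Sum>j\<in>UNIV. d $ j * (norm (row (Inl j) ?X - J_mat *v row (Inr j) ?X))\<^sup>2) = 0"
    using trace_williamson[OF W] eq by simp
  then have "\<forall>j\<in>UNIV. d $ j * (norm (row (Inl j) ?X - J_mat *v row (Inr j) ?X))\<^sup>2 = 0"
    using d_pos by (subst sum_nonneg_eq_0_iff[symmetric]) (auto simp: less_imp_le)
  then have "row (Inl j) ?X = J_mat *v row (Inr j) ?X" for j
    using d_pos by (metis UNIV_I eq_iff_diff_eq_0 less_irrefl mult_eq_0_iff norm_eq_zero power_eq_0_iff)
  then have XXT: "?X ** transpose ?X = mat 1"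
    using symplectic_mult_transpose_if_rows_paired symplectic_symplectic_inverse[OF sy] by blast
  then have "S = transpose ?X"
    using symplectic_inverse(2)[OF sy] by (metis matrix_mul_assoc matrix_mul_lid matrix_mul_rid)
  then have "transpose S ** S = ?X ** transpose ?X" by (metis transpose_transpose)
  then show ?thesis using XXT by (simp add: orthogonal_matrix)
qed

section \<open>Majorization by a doubly stochastic average\<close>

lemma incr_sorted_enumeration:
  fixes x :: "real^'n::finite"
  obtains xs where "distinct xs" "set xs = UNIV" "sorted (map (\<lambda>i. x $ i) xs)"
    "incr x = map (\<lambda>i. x $ i) xs"
proof -
  obtain ys :: "'n list" where ys: "set ys = UNIV" "distinct ys"
    using finite_distinct_list[of "UNIV :: 'n set"] by auto
  have "mset_set (UNIV :: 'n set) = mset ys" using ys by (metis mset_set_set)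
  then have "incr x = sort (map (\<lambda>i. x $ i) ys)"
    by (simp add: incr_def mset_map[symmetric] del: mset_map)
  also have "\<dots> = map (\<lambda>i. x $ i) (sort_key (\<lambda>i. x $ i) ys)"
    by (rule properties_for_sort) simp_all
  finally show ?thesis using ys by (intro that[of "sort_key (\<lambda>i. x $ i) ys"]) simp_all
qed

lemma length_incr: "length (incr (x::real^'n::finite)) = CARD('n)"
  by (metis incr_sorted_enumeration distinct_card length_map)

lemma sum_list_incr: "sum_list (incr (x::real^'n::finite)) = (\<Sum>i\<in>UNIV. x $ i)"
  by (metis incr_sorted_enumeration sum_list_distinct_conv_sum_set)

lemma sort_incr: "sort (incr (x::real^'n::finite)) = incr x"
  by (metis incr_sorted_enumeration sorted_sort_id)

lemma sum_take_incr_threshold: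
  fixes x :: "real^'n::finite"
  assumes "k \<le> CARD('n)"
  obtains I t where "card I = k" "sum_list (take k (incr x)) = (\<Sum>i\<in>I. x $ i)"
    "\<forall>i\<in>I. x $ i \<le> t" "\<forall>i. i \<notin> I \<longrightarrow> t \<le> x $ i"
proof -
  obtain xs where xs: "distinct xs" "set xs = UNIV" "sorted (map (\<lambda>i. x $ i) xs)"
    "incr x = map (\<lambda>i. x $ i) xs"
    by (rule incr_sorted_enumeration)
  have len: "length xs = CARD('n)" using xs by (metis distinct_card)
  define I where "I = set (take k xs)"
  \<comment> \<open>for \<open>k = 0\<close> the truncated \<open>k - 1\<close> selects the minimum, a valid threshold for \<open>I = {}\<close>\<close>
  define t where "t = x $ (xs ! (k - 1))"
  have mono: "m1 \<le> m2 \<Longrightarrow> m2 < CARD('n) \<Longrightarrow> x $ (xs ! m1) \<le> x $ (xs ! m2)" for m1 m2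
    using sorted_nth_mono[OF xs(3), of m1 m2] len by simp
  have position: "i \<in> I \<longleftrightarrow> m < k" if "m < CARD('n)" "xs ! m = i" for i m
    using that xs(1) len by (auto simp: I_def in_set_conv_nth nth_eq_iff_index_eq)
  have enum: "\<exists>m < CARD('n). xs ! m = i" for i using xs(2) len by (metis UNIV_I in_set_conv_nth)
  have "card I = k" using xs(1) assms len by (simp add: I_def distinct_card)
  moreover have "sum_list (take k (incr x)) = (\<Sum>i\<in>I. x $ i)"
    using xs by (simp add: I_def take_map sum_list_distinct_conv_sum_set)
  moreover have "x $ i \<le> t" if "i \<in> I" for i
  proof -
    obtain m where m: "m < CARD('n)" "xs ! m = i" using enum by blast
    then have "m < k" using position that by blast
    then show ?thesis using mono[of m "k - 1"] m assms by (simp add: t_def)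
  qed
  moreover have "t \<le> x $ i" if "i \<notin> I" for i
  proof -
    obtain m where m: "m < CARD('n)" "xs ! m = i" using enum by blast
    then have "k \<le> m" using position that by auto
    then show ?thesis using mono[of "k - 1" m] m by (simp add: t_def)
  qed
  ultimately show ?thesis using that by blast
qed

lemma sum_take_incr_le_weighted_sum:
  fixes x :: "real^'n::finite" and c :: "'n \<Rightarrow> real"
  assumes "k \<le> CARD('n)" "\<forall>j. 0 \<le> c j \<and> c j \<le> 1" "(\<Sum>j\<in>UNIV. c j) = real k"
  shows "sum_list (take k (incr x)) \<le> (\<Sum>j\<in>UNIV. c j * x $ j)"
proof -
  obtain I t where I: "card I = k" "sum_list (take k (incr x)) = (\<Sum>i\<in>I. x $ i)"
    "\<forall>i\<in>I. x $ i \<le> t" "\<forall>i. i \<notin> I \<longrightarrow> t \<le> x $ i"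
    using sum_take_incr_threshold[OF assms(1)] by blast
  define e where "e j = c j - (if j \<in> I then 1 else 0)" for j
  have "0 = (\<Sum>j\<in>UNIV. e j * t)"
    using assms(3) I(1) by (simp add: e_def sum_subtractf sum_distrib_right[symmetric] sum.If_cases)
  also have "\<dots> \<le> (\<Sum>j\<in>UNIV. e j * x $ j)"
  proof (rule sum_mono)
    fix j
    have "0 \<le> e j * (x $ j - t)"
      using assms(2) I(3,4) by (cases "j \<in> I") (auto simp: e_def intro: mult_nonpos_nonpos)
    then show "e j * t \<le> e j * x $ j" by (simp add: algebra_simps)
  qed
  also have "\<dots> = (\<Sum>j\<in>UNIV. c j * x $ j) - sum_list (take k (incr x))"
    using I(2) by (simp add: e_def left_diff_distrib sum_subtractf if_distrib[of "\<lambda>z. z * _"] sum.If_cases)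
  finally show ?thesis by simp
qed

lemma doubly_stochastic_majorized:
  fixes a d :: "real^'n::finite" and w :: "'n \<Rightarrow> 'n \<Rightarrow> real"
  assumes nonneg: "\<forall>i j. w i j \<ge> 0" and rows: "\<forall>i. (\<Sum>j\<in>UNIV. w i j) = 1"
    and cols: "\<forall>j. (\<Sum>i\<in>UNIV. w i j) = 1" and a: "\<forall>i. a $ i = (\<Sum>j\<in>UNIV. w i j * d $ j)"
  shows "majorized (incr a) (incr d)"
  unfolding majorized_def
proof (intro conjI allI impI)
  show "length (incr a) = length (incr d)" by (simp add: length_incr)
  show "sum_list (incr a) = sum_list (incr d)"
    using cols by (simp add: sum_list_incr a sum.swap[of _ UNIV UNIV] sum_distrib_right[symmetric])
  fix k assume "k \<le> length (incr a)"
  then have k: "k \<le> CARD('n)" by (simp add: length_incr)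
  obtain I where I: "card I = k" "sum_list (take k (incr a)) = (\<Sum>i\<in>I. a $ i)"
    using sum_take_incr_threshold[OF k, of a] by blast
  define c where "c j = (\<Sum>i\<in>I. w i j)" for j
  have "c j \<le> 1" for j
    using sum_mono2[of UNIV I "\<lambda>i. w i j"] nonneg cols by (simp add: c_def)
  moreover have "c j \<ge> 0" for j using nonneg by (simp add: c_def sum_nonneg)
  moreover have "(\<Sum>j\<in>UNIV. c j) = real k" using rows I(1) by (simp add: c_def sum.swap[of _ I UNIV])
  ultimately have "sum_list (take k (incr d)) \<le> (\<Sum>j\<in>UNIV. c j * d $ j)"
    using sum_take_incr_le_weighted_sum[OF k] by blast
  also have "\<dots> = sum_list (take k (incr a))"
    using I(2) by (simp add: c_def a sum_distrib_right sum.swap[of _ I UNIV])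
  finally show "sum_list (take k (sort (incr d))) \<le> sum_list (take k (sort (incr a)))"
    by (simp add: sort_incr)
qed

section \<open>Orthosymplectic diagonalization\<close>

lemma J_mat_mult_nth:
  "(J_mat ** S) $ Inl i $ q = S $ Inr i $ q"
  "(S ** (J_mat::'n::finite dmat)) $ p $ Inr j = S $ p $ Inl j"
  "(S ** (J_mat::'n::finite dmat)) $ p $ Inl j = - S $ p $ Inr j"
  by (simp_all add: matrix_matrix_mult_def sum_UNIV_Plus J_mat_nth)

lemma orthosymplectic_blocks:
  fixes S :: "'n::finite dmat"
  assumes "orthosymplectic S"
  shows "S $ Inr i $ Inl j = - S $ Inl i $ Inr j" "S $ Inr i $ Inr j = S $ Inl i $ Inl j"
proof -
  have sy: "transpose S ** J_mat ** S = J_mat" and o: "S ** transpose S = mat 1"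
    using assms by (auto simp: orthosymplectic_def symplectic_def orthogonal_matrix_def)
  have "S ** (transpose S ** J_mat ** S) = S ** J_mat" using sy by simp
  then have JS: "J_mat ** S = S ** J_mat" by (simp add: matrix_mul_assoc o)
  show "S $ Inr i $ Inl j = - S $ Inl i $ Inr j"
    using arg_cong[OF JS, of "\<lambda>X. X $ Inl i $ Inl j"] by (simp add: J_mat_mult_nth)
  show "S $ Inr i $ Inr j = S $ Inl i $ Inl j"
    using arg_cong[OF JS, of "\<lambda>X. X $ Inl i $ Inr j"] by (simp add: J_mat_mult_nth)
qed

lemma williamson_orthogonal_nth:
  assumes W: "williamson A S d" and o: "orthogonal_matrix S"
  shows "A $ p $ q = (\<Sum>j\<in>UNIV. d $ j * (S $ p $ Inl j * S $ q $ Inl j + S $ p $ Inr j * S $ q $ Inr j))"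
proof -
  have D: "transpose S ** A ** S = blockdiag d" using W by (simp add: williamson_def)
  have SST: "S ** transpose S = mat 1" using o by (simp add: orthogonal_matrix_def)
  have "transpose (transpose S) ** blockdiag d ** transpose S = (S ** transpose S) ** A ** (S ** transpose S)"
    by (simp add: D[symmetric] matrix_mul_assoc)
  then have "A = transpose (transpose S) ** blockdiag d ** transpose S" using SST by simp
  then have "A $ p $ q = row p S \<bullet> (blockdiag d *v row q S)"
    by (simp only: transpose_mult_mult_nth column_transpose)
  also have "\<dots> = (\<Sum>j\<in>UNIV. d $ j * (S $ p $ Inl j * S $ q $ Inl j + S $ p $ Inr j * S $ q $ Inr j))"
    by (simp add: inner_Plus blockdiag_mult_vec row_def sum.distrib[symmetric] algebra_simps)
  finally show ?thesis .
qed

lemma orthosymp_diagonalizable_majorized: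
  assumes "orthosymp_diagonalizable A"
  shows "majorized (incr (Delta_w A)) (symp_eigs A) \<and> majorized (incr (Delta_h A)) (symp_eigs A)"
proof -
  obtain S d where W: "williamson A S d" and os: "orthosymplectic S"
    using assms by (auto simp: orthosymp_diagonalizable_def)
  have d_pos: "\<forall>j. d $ j > 0" using W by (simp add: williamson_def)
  have o: "orthogonal_matrix S" using os by (simp add: orthosymplectic_def)
  note blocks = orthosymplectic_blocks[OF os]
  note A_nth = williamson_orthogonal_nth[OF W o]
  define w where "w i j = (S $ Inl i $ Inl j)\<^sup>2 + (S $ Inl i $ Inr j)\<^sup>2" for i j
  have w_nonneg: "\<forall>i j. w i j \<ge> 0" by (simp add: w_def)
  have rows: "\<forall>i. (\<Sum>j\<in>UNIV. w i j) = 1"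
  proof
    fix i
    have "(S ** transpose S) $ Inl i $ Inl i = 1" using o by (simp add: orthogonal_matrix_def mat_def)
    then show "(\<Sum>j\<in>UNIV. w i j) = 1"
      by (simp add: matrix_mult_transpose_dot_row inner_Plus row_def w_def power2_eq_square sum.distrib)
  qed
  have cols: "\<forall>j. (\<Sum>i\<in>UNIV. w i j) = 1"
  proof
    fix j
    have "(transpose S ** S) $ Inl j $ Inl j = 1" using o by (simp add: orthogonal_matrix_def mat_def)
    then show "(\<Sum>i\<in>UNIV. w i j) = 1"
      by (simp add: matrix_mult_transpose_dot_column inner_Plus column_def w_def power2_eq_square
          sum.distrib blocks(1))
  qed
  have D11: "Delta11 A $ i = (\<Sum>j\<in>UNIV. w i j * d $ j)" for i
    by (simp add: Delta11_def A_nth w_def power2_eq_square algebra_simps)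
  have D22: "Delta22 A = Delta11 A" by (simp add: vec_eq_iff Delta11_def Delta22_def A_nth blocks algebra_simps)
  have D12: "Delta12 A $ i = 0" for i by (simp add: Delta12_def A_nth blocks algebra_simps)
  have "Delta11 A $ i \<ge> 0" for i using d_pos w_nonneg by (simp add: D11 sum_nonneg less_imp_le)
  then have "Delta_w A = Delta11 A" "Delta_h A = Delta11 A"
    by (simp_all add: Delta_w_def Delta_h_def D22 D12 vec_eq_iff)
  moreover have "majorized (incr (Delta11 A)) (incr d)"
    by (rule doubly_stochastic_majorized[OF w_nonneg rows cols]) (simp add: D11)
  ultimately show ?thesis by (simp add: symp_eigs_williamson[OF W])
qed

lemma arith_mean_le_quadratic_mean: "(a + b) / 2 \<le> sqrt ((a\<^sup>2 + b\<^sup>2) / (2::real))"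
proof (rule real_le_rsqrt)
  have "(a\<^sup>2 + b\<^sup>2) / 2 - ((a + b) / 2)\<^sup>2 = ((a - b) / 2)\<^sup>2" by (simp add: power2_eq_square field_simps)
  then show "((a + b) / 2)\<^sup>2 \<le> (a\<^sup>2 + b\<^sup>2) / 2" by (metis diff_ge_0_iff_ge zero_le_power2)
qed

lemma orthosymp_diagonalizable_if_sum_le:
  assumes W: "williamson A S d" and le: "(\<Sum>i\<in>UNIV. Delta_w A $ i) \<le> (\<Sum>j\<in>UNIV. d $ j)"
  shows "orthosymp_diagonalizable A"
proof -
  have "trace A = (\<Sum>i\<in>UNIV. Delta11 A $ i + Delta22 A $ i)"
    by (simp add: trace_def sum_UNIV_Plus Delta11_def Delta22_def sum.distrib)
  also have "\<dots> \<le> 2 * (\<Sum>i\<in>UNIV. Delta_w A $ i)"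
    using arith_mean_le_quadratic_mean by (simp add: sum_distrib_left Delta_w_def sum_mono field_simps)
  finally have "trace A = 2 * (\<Sum>j\<in>UNIV. d $ j)"
    using le trace_ge_williamson[OF W] by linarith
  then have "orthogonal_matrix S" by (rule orthogonal_if_trace_eq_williamson[OF W])
  then show ?thesis using W by (auto simp: orthosymp_diagonalizable_def orthosymplectic_def williamson_def)
qed

theorem theorem1p2:
  fixes A :: "real ^ ('n::finite + 'n) ^ ('n + 'n)"
  assumes "sym_posdef A"
  shows "(majorized (incr (Delta_w A)) (symp_eigs A) \<longleftrightarrow> majorized (incr (Delta_h A)) (symp_eigs A))
       \<and> (majorized (incr (Delta_h A)) (symp_eigs A) \<longleftrightarrow> orthosymp_diagonalizable A)"
proof -
  obtain S d where W: "williamson A S d"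
    using spd_matrix.williamson_exists[OF spd_matrix.intro[OF assms]] by blast
  have sums: "sum_list (incr (Delta_w A)) \<le> sum_list (incr (Delta_h A))"
    by (simp add: sum_list_incr Delta_w_def Delta_h_def sum_mono)
  have "orthosymp_diagonalizable A" if "majorized (incr v) (symp_eigs A)"
    and "sum_list (incr (Delta_w A)) \<le> sum_list (incr v)" for v :: "real^'n"
    using that orthosymp_diagonalizable_if_sum_le[OF W]
    by (simp add: majorized_def symp_eigs_williamson[OF W] sum_list_incr)
  then show ?thesis using orthosymp_diagonalizable_majorized sums by blast
qed

end
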